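(* Let $X$ be a prelength space. Then $\mathrm{join}\circ\mathrm{map}(\mathrm{join})\asymp\mathrm{join}\circ\mathrm{join}$ as functions $\mathfrak{C}(\mathfrak{C}(\mathfrak{C}(X)))\to\mathfrak{C}(X)$, where $\mathrm{join}:\mathfrak{C}(\mathfrak{C}(X))\to\mathfrak{C}(X)$ is regarded as uniformly continuous with modulus $\lambda\varepsilon.\varepsilon$.
   Context: $\mathbb{Q}^+$ denotes the strictly positive rationals; all $\varepsilon,\delta$ (with indices) range over $\mathbb{Q}^+$. A metric space is a triple $(X,\asymp,B)$ where $\asymp$ is an equivalence relation on $X$ and $B$ assigns to each $\varepsilon\in\mathbb{Q}^+$ a binary relation $B_\varepsilon$ on $X$ respecting $\asymp$, such that: (1) each $B_\varepsilon$ is reflexive; (2) each $B_\varepsilon$ is symmetric; (3) if $B_{\varepsilon_1}(a,b)$ and $B_{\varepsilon_2}(b,c)$ then $B_{\varepsilon_1+\varepsilon_2}(a,c)$; (4) if $B_{\varepsilon+\delta}(a,b)$ for all $\delta$, then $B_\varepsilon(a,b)$; (5) if $B_\varepsilon(a,b)$ for all $\varepsilon$, then $a\asymp b$. A prelength space is a metric space such that for all $a,b,\varepsilon,\delta_1,\delta_2$ with $\varepsilon<\delta_1+\delta_2$ and $B_\varepsilon(a,b)$ there exists $c$ with $B_{\delta_1}(a,c)$ and $B_{\delta_2}(c,b)$. A regular function over $X$ is a function $x:\mathbb{Q}^+\to X$ such that $B_{\varepsilon_1+\varepsilon_2}(x(\varepsilon_1),x(\varepsilon_2))$ for all $\varepsilon_1,\varepsilon_2$.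 $\mathfrak{C}(X)$ is the metric space of regular functions over $X$ with $x\asymp y$ iff $B_{2\varepsilon}(x(\varepsilon),y(\varepsilon))$ for all $\varepsilon$ and $B'_\varepsilon(x,y)$ iff $B_{\varepsilon+\delta_1+\delta_2}(x(\delta_1),y(\delta_2))$ for all $\delta_1,\delta_2$; iterated completions are formed by repeating the construction. For any metric space $W$ and $x\in\mathfrak{C}(\mathfrak{C}(W))$, $\mathrm{join}(x)=\lambda\varepsilon.\,x(\tfrac{\varepsilon}{2})(\tfrac{\varepsilon}{2})$. For $f$ uniformly continuous with modulus $\mu_f$ (i.e. $B_{\mu_f(\varepsilon)}(x_1,x_2)$ implies $B_\varepsilon(f(x_1),f(x_2))$), $\mathrm{map}(f)(x)=\lambda\varepsilon.\,f(x(\mu_f(\varepsilon)))$. Two functions $h,k$ into a metric space satisfy $h\asymp k$ iff $h(a)\asymp k(a)$ for all $a$. *)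

theory Defs
  imports Complex_Main
begin

record 'a mspace =
  msp_carrier :: "'a set"
  msp_eq :: "'a \<Rightarrow> 'a \<Rightarrow> bool"
  msp_ball :: "rat \<Rightarrow> 'a \<Rightarrow> 'a \<Rightarrow> bool"

definition is_metric_space :: "'a mspace \<Rightarrow> bool" where
  "is_metric_space M \<longleftrightarrow>
     (let S = msp_carrier M; E = msp_eq M; B = msp_ball M in
      (\<forall>a\<in>S. E a a) \<and>
      (\<forall>a\<in>S. \<forall>b\<in>S. E a b \<longrightarrow> E b a) \<and>
      (\<forall>a\<in>S. \<forall>b\<in>S. \<forall>c\<in>S. E a b \<longrightarrow> E b c \<longrightarrow> E a c) \<and>
      (\<forall>e>0. \<forall>a\<in>S. \<forall>a'\<in>S. \<forall>b\<in>S. \<forall>b'\<in>S.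
          E a a' \<longrightarrow> E b b' \<longrightarrow> B e a b \<longrightarrow> B e a' b') \<and>
      (\<forall>e>0. \<forall>a\<in>S. B e a a) \<and>
      (\<forall>e>0. \<forall>a\<in>S. \<forall>b\<in>S. B e a b \<longrightarrow> B e b a) \<and>
      (\<forall>e1>0. \<forall>e2>0. \<forall>a\<in>S. \<forall>b\<in>S. \<forall>c\<in>S.
          B e1 a b \<longrightarrow> B e2 b c \<longrightarrow> B (e1 + e2) a c) \<and>
      (\<forall>e>0. \<forall>a\<in>S. \<forall>b\<in>S. (\<forall>d>0. B (e + d) a b) \<longrightarrow> B e a b) \<and>
      (\<forall>a\<in>S. \<forall>b\<in>S. (\<forall>e>0. B e a b) \<longrightarrow> E a b))"

definition is_prelength_space :: "'a mspace \<Rightarrow> bool" where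
  "is_prelength_space M \<longleftrightarrow> is_metric_space M \<and>
     (\<forall>a\<in>msp_carrier M. \<forall>b\<in>msp_carrier M. \<forall>e>0. \<forall>d1>0. \<forall>d2>0.
        e < d1 + d2 \<longrightarrow> msp_ball M e a b \<longrightarrow>
        (\<exists>c\<in>msp_carrier M. msp_ball M d1 a c \<and> msp_ball M d2 c b))"

text \<open>Regular functions: only their values at positive rationals matter.\<close>
definition regular_fun :: "'a mspace \<Rightarrow> (rat \<Rightarrow> 'a) \<Rightarrow> bool" where
  "regular_fun M x \<longleftrightarrow> (\<forall>e>0. x e \<in> msp_carrier M) \<and>
     (\<forall>e1>0. \<forall>e2>0. msp_ball M (e1 + e2) (x e1) (x e2))"

definition completion :: "'a mspace \<Rightarrow> (rat \<Rightarrow> 'a) mspace" where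
  "completion M =
     \<lparr> msp_carrier = {x. regular_fun M x},
       msp_eq = (\<lambda>x y. \<forall>e>0. msp_ball M (2 * e) (x e) (y e)),
       msp_ball = (\<lambda>e x y. \<forall>d1>0. \<forall>d2>0. msp_ball M (e + d1 + d2) (x d1) (y d2)) \<rparr>"

definition join :: "(rat \<Rightarrow> rat \<Rightarrow> 'a) \<Rightarrow> (rat \<Rightarrow> 'a)" where
  "join x = (\<lambda>e. x (e / 2) (e / 2))"

definition map_uc :: "(rat \<Rightarrow> rat) \<Rightarrow> ('a \<Rightarrow> 'b) \<Rightarrow> (rat \<Rightarrow> 'a) \<Rightarrow> (rat \<Rightarrow> 'b)" where
  "map_uc mu f x = (\<lambda>e. f (x (mu e)))"

end

theory Submission
  imports Defs
begin

text \<open>At precision \<open>\<epsilon>\<close> the two composites read off the entries \<open>x(\<epsilon>/2)(\<epsilon>/4)(\<epsilon>/4)\<close> and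
  \<open>x(\<epsilon>/4)(\<epsilon>/4)(\<epsilon>/2)\<close>. Regularity of \<open>x\<close> at each of the three levels bounds their distance
  by \<open>(\<epsilon>/2 + \<epsilon>/4) + (\<epsilon>/4 + \<epsilon>/4) + (\<epsilon>/4 + \<epsilon>/2) = 2\<epsilon>\<close>, which is exactly the equality of
  the completion.\<close>

lemma msp_eq_completion_iff:
  "msp_eq (completion M) x y \<longleftrightarrow> (\<forall>e>0. msp_ball M (2 * e) (x e) (y e))"
  by (simp add: completion_def)

lemma msp_ball_completion_components:
  assumes "msp_ball (completion M) e x y" and "0 < d1" and "0 < d2"
  shows "msp_ball M (e + d1 + d2) (x d1) (y d2)"
  using assms by (simp add: completion_def)

lemma msp_ball_completion_regular:
  assumes "x \<in> msp_carrier (completion M)" and "0 < e1" and "0 < e2"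
  shows "msp_ball M (e1 + e2) (x e1) (x e2)"
  using assms by (simp add: completion_def regular_fun_def)

lemma join_map_join_apply: "(join \<circ> map_uc (\<lambda>e. e) join) x e = x (e / 2) (e / 4) (e / 4)"
  by (simp add: join_def map_uc_def)

lemma join_join_apply: "(join \<circ> join) x e = x (e / 4) (e / 4) (e / 2)"
  by (simp add: join_def)

theorem theorem22:
  fixes X :: "'a mspace"
  assumes "is_prelength_space X"
  shows "\<forall>x \<in> msp_carrier (completion (completion (completion X))).
           msp_eq (completion X) ((join \<circ> map_uc (\<lambda>e. e) join) x) ((join \<circ> join) x)"
proof
  fix x assume x: "x \<in> msp_carrier (completion (completion (completion X)))"
  show "msp_eq (completion X) ((join \<circ> map_uc (\<lambda>e. e) join) x) ((join \<circ> join) x)"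
    unfolding msp_eq_completion_iff join_map_join_apply join_join_apply
  proof (intro allI impI)
    fix e :: rat assume "0 < e"
    then have pos: "0 < e / 2" "0 < e / 4" by simp_all
    have "msp_ball (completion (completion X)) (e / 2 + e / 4) (x (e / 2)) (x (e / 4))"
      using msp_ball_completion_regular[OF x pos] .
    then have "msp_ball (completion X) (e / 2 + e / 4 + e / 4 + e / 4) (x (e / 2) (e / 4)) (x (e / 4) (e / 4))"
      using msp_ball_completion_components pos by blast
    then have "msp_ball X (e / 2 + e / 4 + e / 4 + e / 4 + e / 4 + e / 2)
        (x (e / 2) (e / 4) (e / 4)) (x (e / 4) (e / 4) (e / 2))"
      using msp_ball_completion_components pos by blast
    moreover have "e / 2 + e / 4 + e / 4 + e / 4 + e / 4 + e / 2 = 2 * e" by simp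
    ultimately show "msp_ball X (2 * e) (x (e / 2) (e / 4) (e / 4)) (x (e / 4) (e / 4) (e / 2))"
      by simp
  qed
qed

end
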